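(* Let $G_1$ and $G_2$ be graphs on $n$ nodes with Laplacian matrices $Q_1,Q_2$, let $k\in\{1,\dots,n\}$, and let $\hat B$ be an $n\times n$ zero-one matrix with exactly $k$ ones in every row and every column. For $p\ge 0$ let $$Q(p)=\begin{bmatrix} Q_1+kpI & -p\hat B\\ -p\hat B^T & Q_2+kpI\end{bmatrix},$$ with eigenvalues $0=\mu_N(p)\le \mu_{N-1}(p)\le\dots\le\mu_1(p)$, $N=2n$. Define the transition threshold $p^*=\sup\big(\{0\}\cup\{p>0:\ \mu_{N-1}(p)=2kp\}\big)$. Then $$p^*\le \frac{1}{k}\min\big(\mu_{n-1}(Q_1),\ \mu_{n-1}(Q_2)\big),$$ where $\mu_{n-1}(Q_i)$ denotes the second smallest eigenvalue (algebraic connectivity) of $Q_i$.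
   Context: $Q(p)$ is the Laplacian of the two-layer interdependent network with a $k$-to-$k$ interconnection of weight $p$; $2kp$ is always an eigenvalue of $Q(p)$ (eigenvector $[u^T,-u^T]^T$). The paper describes $p^*$ as the coupling value beyond which $\mu_{N-1}(p)\neq 2kp$; here it is formalized as the supremum above. *)

theory Defs
  imports "Jordan_Normal_Form.Char_Poly" "HOL-Library.Multiset"
begin

definition simple_graph :: "nat \<Rightarrow> (nat \<Rightarrow> nat \<Rightarrow> bool) \<Rightarrow> bool" where
  "simple_graph n E \<longleftrightarrow> (\<forall>i j. E i j \<longrightarrow> i < n \<and> j < n) \<and>
     (\<forall>i j. E i j \<longrightarrow> E j i) \<and> (\<forall>i. \<not> E i i)"

definition laplacian :: "nat \<Rightarrow> (nat \<Rightarrow> nat \<Rightarrow> bool) \<Rightarrow> real mat" where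
  "laplacian n E = mat n n (\<lambda>(i,j).
     if i = j then real (card {l. l < n \<and> E i l}) else if E i j then -1 else 0)"

definition eigs_asc :: "real mat \<Rightarrow> real list" where
  "eigs_asc A = sorted_list_of_multiset (proots (char_poly A))"

definition k_regular_01 :: "nat \<Rightarrow> nat \<Rightarrow> real mat \<Rightarrow> bool" where
  "k_regular_01 n k B \<longleftrightarrow> B \<in> carrier_mat n n \<and>
     (\<forall>i<n. \<forall>j<n. B $$ (i,j) = 0 \<or> B $$ (i,j) = 1) \<and>
     (\<forall>i<n. card {j. j < n \<and> B $$ (i,j) = 1} = k) \<and>
     (\<forall>j<n. card {i. i < n \<and> B $$ (i,j) = 1} = k)"

definition Qp :: "nat \<Rightarrow> nat \<Rightarrow> real mat \<Rightarrow> real mat \<Rightarrow> real mat \<Rightarrow> real \<Rightarrow> real mat" where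
  "Qp n k Q1 Q2 B p = four_block_mat
     (Q1 + (real k * p) \<cdot>\<^sub>m 1\<^sub>m n) (- (p \<cdot>\<^sub>m B))
     (- (p \<cdot>\<^sub>m transpose_mat B)) (Q2 + (real k * p) \<cdot>\<^sub>m 1\<^sub>m n)"

text \<open>mu_{N-1}(p): the second smallest eigenvalue of Q(p).\<close>
definition mu_Nm1 :: "nat \<Rightarrow> nat \<Rightarrow> real mat \<Rightarrow> real mat \<Rightarrow> real mat \<Rightarrow> real \<Rightarrow> real" where
  "mu_Nm1 n k Q1 Q2 B p = eigs_asc (Qp n k Q1 Q2 B p) ! 1"

definition p_star :: "nat \<Rightarrow> nat \<Rightarrow> real mat \<Rightarrow> real mat \<Rightarrow> real mat \<Rightarrow> real" where
  "p_star n k Q1 Q2 B = Sup ({0} \<union> {p. p > 0 \<and> mu_Nm1 n k Q1 Q2 B p = 2 * real k * p})"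

end

theory Submission
  imports Defs "HOL-Computational_Algebra.Fundamental_Theorem_Algebra"
begin

text \<open>
  The all-ones vector spans a kernel direction of Q(p), so by the Courant-Fischer principle
  the second smallest eigenvalue of Q(p) is at most the Rayleigh quotient of any nonzero vector
  orthogonal to it. Take v orthogonal to the all-ones vector of one layer whose Rayleigh quotient
  for that layer's Laplacian Q_i is at most lambda_2(Q_i), and pad v with zeros on the other
  layer. Its Rayleigh quotient for Q(p) is that of v for Q_i plus kp, so at a coupling p with
  mu_{N-1}(p) = 2kp we get 2kp <= lambda_2(Q_i) + kp, that is kp <= lambda_2(Q_i).
  Both directions of Courant-Fischer needed here are derived from the orthogonal
  diagonalization of real symmetric matrices, obtained by Householder deflation.
\<close>

section \<open>Orthogonal diagonalization of real symmetric matrices\<close>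

lemma real_vec_square_pos_iff:
  fixes x :: "real vec"
  assumes "x \<in> carrier_vec m"
  shows "x \<bullet> x > 0 \<longleftrightarrow> x \<noteq> 0\<^sub>v m"
  using conjugate_square_greater_0_vec[OF assms] by simp

lemma conjugate_of_real_mat_mult_vec:
  fixes A :: "real mat"
  assumes A: "A \<in> carrier_mat m m" and v: "v \<in> carrier_vec m"
  shows "conjugate (map_mat complex_of_real A *\<^sub>v v) = map_mat complex_of_real A *\<^sub>v conjugate v"
  using A v by (intro eq_vecI) (auto simp: scalar_prod_def conjugate_complex_def)

lemma symmetric_real_mat_eigenvalue_real:
  fixes A :: "real mat"
  assumes A: "A \<in> carrier_mat m m" and sym: "transpose_mat A = A"
    and z: "eigenvalue (map_mat complex_of_real A) z"
  shows "z \<in> \<real>"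
proof -
  let ?M = "map_mat complex_of_real A"
  have M: "?M \<in> carrier_mat m m" and symM: "transpose_mat ?M = ?M"
    using A sym by (auto simp: map_mat_transpose)
  obtain v where v: "v \<in> carrier_vec m" "v \<noteq> 0\<^sub>v m" "?M *\<^sub>v v = z \<cdot>\<^sub>v v"
    using z M unfolding eigenvalue_def eigenvector_def by auto
  have "z * (v \<bullet>c v) = (?M *\<^sub>v v) \<bullet>c v"
    using v by simp
  also have "\<dots> = v \<bullet> (?M *\<^sub>v conjugate v)"
    using transpose_vec_mult_scalar[OF M, of "conjugate v" v] symM v by simp
  also have "\<dots> = cnj z * (v \<bullet>c v)"
    using v by (simp add: conjugate_of_real_mat_mult_vec[OF A, symmetric] conjugate_smult_vec
        conjugate_complex_def)
  finally have "z = cnj z"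
    using v by simp
  then show ?thesis
    by (metis Reals_cnj_iff)
qed

lemma symmetric_real_mat_has_eigenvalue:
  fixes A :: "real mat"
  assumes A: "A \<in> carrier_mat m m" and sym: "transpose_mat A = A" and m: "m > 0"
  obtains e where "eigenvalue A e"
proof -
  let ?M = "map_mat complex_of_real A"
  have M: "?M \<in> carrier_mat m m"
    using A by simp
  have "degree (char_poly ?M) > 0"
    using degree_monic_char_poly[OF M] m by simp
  then obtain z where root: "poly (char_poly ?M) z = 0"
    using fundamental_theorem_of_algebra constant_degree by (metis neq0_conv)
  then have "z \<in> \<real>"
    using symmetric_real_mat_eigenvalue_real[OF A sym] eigenvalue_root_char_poly[OF M] by blast
  then obtain e where z: "z = complex_of_real e"
    by (auto elim: Reals_cases)
  have "poly (map_poly complex_of_real (char_poly A)) (complex_of_real e) = 0"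
    using root of_real_hom.char_poly_hom[OF A] z by metis
  then have "poly (char_poly A) e = 0"
    by (simp add: of_real_hom.poly_map_poly)
  then show ?thesis
    using that eigenvalue_root_char_poly[OF A] by blast
qed

lemma real_eigenvalue_unit_eigenvector:
  fixes A :: "real mat"
  assumes A: "A \<in> carrier_mat m m" and e: "eigenvalue A e"
  obtains v where "v \<in> carrier_vec m" "v \<bullet> v = 1" "A *\<^sub>v v = e \<cdot>\<^sub>v v"
proof -
  obtain u where u: "u \<in> carrier_vec m" "u \<noteq> 0\<^sub>v m" "A *\<^sub>v u = e \<cdot>\<^sub>v u"
    using e A unfolding eigenvalue_def eigenvector_def by auto
  have uu: "u \<bullet> u > 0"
    using real_vec_square_pos_iff[OF u(1)] u(2) by simp
  define v where "v = (1 / sqrt (u \<bullet> u)) \<cdot>\<^sub>v u"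
  show ?thesis
  proof (rule that)
    show "v \<in> carrier_vec m"
      unfolding v_def using u(1) by simp
    show "v \<bullet> v = 1"
      unfolding v_def using u(1) uu by (simp add: power2_eq_square[symmetric])
    show "A *\<^sub>v v = e \<cdot>\<^sub>v v"
      unfolding v_def using u A by (simp add: mult_mat_vec smult_smult_assoc mult.commute)
  qed
qed

definition householder_mat :: "nat \<Rightarrow> real vec \<Rightarrow> real mat" where
  "householder_mat m w = mat m m (\<lambda>(i, j). of_bool (i = j) - 2 / (w \<bullet> w) * w $ i * w $ j)"

lemma householder_mat_carrier: "householder_mat m w \<in> carrier_mat m m"
  unfolding householder_mat_def by simp

lemma householder_mat_transpose: "transpose_mat (householder_mat m w) = householder_mat m w"
  unfolding householder_mat_def by (intro eq_matI) auto

lemma householder_mat_mult_vec: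
  assumes w: "w \<in> carrier_vec m" and x: "x \<in> carrier_vec m"
  shows "householder_mat m w *\<^sub>v x = x - (2 * (w \<bullet> x) / (w \<bullet> w)) \<cdot>\<^sub>v w"
proof (rule eq_vecI)
  define c where "c = 2 / (w \<bullet> w)"
  fix i assume "i < dim_vec (x - (2 * (w \<bullet> x) / (w \<bullet> w)) \<cdot>\<^sub>v w)"
  then have i: "i < m"
    using x w by simp
  have "(householder_mat m w *\<^sub>v x) $ i = (\<Sum>j<m. (of_bool (i = j) - c * w $ i * w $ j) * x $ j)"
    using i x by (simp add: householder_mat_def c_def scalar_prod_def lessThan_atLeast0)
  also have "\<dots> = x $ i - c * w $ i * (\<Sum>j<m. w $ j * x $ j)"
    using i by (simp add: algebra_simps sum_subtractf sum_distrib_left)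
  also have "\<dots> = (x - (2 * (w \<bullet> x) / (w \<bullet> w)) \<cdot>\<^sub>v w) $ i"
    using i x w by (simp add: c_def scalar_prod_def lessThan_atLeast0)
  finally show "(householder_mat m w *\<^sub>v x) $ i = (x - (2 * (w \<bullet> x) / (w \<bullet> w)) \<cdot>\<^sub>v w) $ i" .
qed (use w in \<open>simp add: householder_mat_def\<close>)

lemma householder_mat_involutive:
  assumes w: "w \<in> carrier_vec m" "w \<noteq> 0\<^sub>v m" and x: "x \<in> carrier_vec m"
  shows "householder_mat m w *\<^sub>v (householder_mat m w *\<^sub>v x) = x"
proof -
  define a where "a = 2 * (w \<bullet> x) / (w \<bullet> w)"
  have ww: "w \<bullet> w \<noteq> 0"
    using real_vec_square_pos_iff[OF w(1)] w(2) by simp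
  have Hx: "householder_mat m w *\<^sub>v x = x - a \<cdot>\<^sub>v w"
    unfolding a_def by (rule householder_mat_mult_vec[OF w(1) x])
  have "w \<bullet> (x - a \<cdot>\<^sub>v w) = - (w \<bullet> x)"
    using w x ww by (simp add: scalar_prod_minus_distrib a_def)
  then have "householder_mat m w *\<^sub>v (x - a \<cdot>\<^sub>v w) = (x - a \<cdot>\<^sub>v w) - (- a) \<cdot>\<^sub>v w"
    using householder_mat_mult_vec[OF w(1), of "x - a \<cdot>\<^sub>v w"] w x by (simp add: a_def)
  also have "\<dots> = x"
    using w x by (intro eq_vecI) auto
  finally show ?thesis
    unfolding Hx .
qed

lemma householder_mat_square:
  assumes w: "w \<in> carrier_vec m" "w \<noteq> 0\<^sub>v m"
  shows "householder_mat m w * householder_mat m w = 1\<^sub>m m"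
proof (rule mat_col_eqI)
  let ?H = "householder_mat m w"
  fix j assume "j < dim_col (1\<^sub>m m :: real mat)"
  then have j: "j < m"
    by simp
  have "col ?H j = ?H *\<^sub>v unit_vec m j"
    using col_mult2[OF householder_mat_carrier[of m w] one_carrier_mat j] j
      right_mult_one_mat[OF householder_mat_carrier[of m w]] by simp
  then have "col (?H * ?H) j = ?H *\<^sub>v (?H *\<^sub>v unit_vec m j)"
    using col_mult2[OF householder_mat_carrier householder_mat_carrier j] by simp
  then show "col (?H * ?H) j = col (1\<^sub>m m) j"
    using householder_mat_involutive[OF w unit_vec_carrier] j by simp
qed (simp_all add: householder_mat_def)

lemma reflection_to_unit_vec:
  fixes v :: "real vec"
  assumes v: "v \<in> carrier_vec m" and vv: "v \<bullet> v = 1"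
  obtains H where "H \<in> carrier_mat m m" "transpose_mat H = H" "H * H = 1\<^sub>m m"
    "H *\<^sub>v unit_vec m 0 = v"
proof (cases "v = unit_vec m 0")
  case True
  then show ?thesis
    using that[of "1\<^sub>m m"] by simp
next
  case False
  have m: "0 < m"
    using v vv by (cases m) (auto simp: scalar_prod_def)
  define w where "w = v - unit_vec m 0"
  have vw: "v = unit_vec m 0 + w"
    using v unfolding w_def by (intro eq_vecI) auto
  have w: "w \<in> carrier_vec m" "w \<noteq> 0\<^sub>v m"
    using v False vw unfolding w_def by auto
  \<comment> \<open>As v is a unit vector, w \<bullet> w = -2 (w \<bullet> e_0), so the reflection maps e_0 to e_0 + w = v.\<close>
  have "w \<bullet> w = - 2 * (w \<bullet> unit_vec m 0)"
    using v m vv unfolding w_def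
    by (simp add: minus_scalar_prod_distrib scalar_prod_minus_distrib comm_scalar_prod[of _ m])
  moreover have "w \<bullet> w \<noteq> 0"
    using real_vec_square_pos_iff[OF w(1)] w(2) by simp
  ultimately have "householder_mat m w *\<^sub>v unit_vec m 0 = unit_vec m 0 + w"
    using householder_mat_mult_vec[OF w(1) unit_vec_carrier] w(1) by (intro eq_vecI) auto
  then have "householder_mat m w *\<^sub>v unit_vec m 0 = v"
    using vw by simp
  then show ?thesis
    using that householder_mat_carrier householder_mat_transpose householder_mat_square[OF w]
    by blast
qed

lemma four_block_diag_mult:
  fixes A1 A2 D1 D2 :: "'a :: comm_ring_1 mat"
  assumes "A1 \<in> carrier_mat a a" "A2 \<in> carrier_mat a a" "D1 \<in> carrier_mat b b" "D2 \<in> carrier_mat b b"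
  shows "four_block_mat A1 (0\<^sub>m a b) (0\<^sub>m b a) D1 * four_block_mat A2 (0\<^sub>m a b) (0\<^sub>m b a) D2
    = four_block_mat (A1 * A2) (0\<^sub>m a b) (0\<^sub>m b a) (D1 * D2)"
  using assms by (subst mult_four_block_mat[of _ a a _ b _ b]) auto

lemma four_block_diag_transpose:
  assumes "A \<in> carrier_mat a a" "D \<in> carrier_mat b b"
  shows "transpose_mat (four_block_mat A (0\<^sub>m a b) (0\<^sub>m b a) D)
    = four_block_mat (transpose_mat A) (0\<^sub>m a b) (0\<^sub>m b a) (transpose_mat D)"
  using assms by (subst transpose_four_block_mat) auto

lemma symmetric_mat_conjugate:
  fixes H A :: "'a :: comm_semiring_0 mat"
  assumes H: "H \<in> carrier_mat n n" "transpose_mat H = H" and A: "A \<in> carrier_mat n n" "transpose_mat A = A"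
  shows "transpose_mat (H * A * H) = H * A * H"
proof -
  have "transpose_mat (H * A * H) = transpose_mat H * transpose_mat (H * A)"
    using H A by (intro transpose_mult[of _ n n]) auto
  also have "transpose_mat (H * A) = A * H"
    using H A by (simp add: transpose_mult[of _ n n])
  finally show ?thesis
    using assoc_mult_mat[OF H(1) A(1) H(1)] H(2) by simp
qed

lemma symmetric_mat_eigenvector_block:
  fixes A :: "'a :: comm_ring_1 mat"
  assumes A: "A \<in> carrier_mat (Suc m) (Suc m)" and sym: "transpose_mat A = A"
    and e: "A *\<^sub>v unit_vec (Suc m) 0 = e \<cdot>\<^sub>v unit_vec (Suc m) 0"
  shows "A = four_block_mat (mat 1 1 (\<lambda>_. e)) (0\<^sub>m 1 m) (0\<^sub>m m 1)
    (mat m m (\<lambda>(i, j). A $$ (Suc i, Suc j)))"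
proof -
  have col0: "A $$ (i, 0) = (if i = 0 then e else 0)" if i: "i < Suc m" for i
  proof -
    have "A $$ (i, 0) = (A *\<^sub>v unit_vec (Suc m) 0) $ i"
      using A i by simp
    then show ?thesis
      unfolding e using i by simp
  qed
  have row0: "A $$ (0, j) = (if j = 0 then e else 0)" if j: "j < Suc m" for j
  proof -
    have "A $$ (0, j) = transpose_mat A $$ (j, 0)"
      using A j by simp
    then show ?thesis
      using col0[OF j] sym by simp
  qed
  show ?thesis
  proof (rule eq_matI)
    fix i j
    assume "i < dim_row (four_block_mat (mat 1 1 (\<lambda>_. e)) (0\<^sub>m 1 m) (0\<^sub>m m 1)
        (mat m m (\<lambda>(i, j). A $$ (Suc i, Suc j))))"
      and "j < dim_col (four_block_mat (mat 1 1 (\<lambda>_. e)) (0\<^sub>m 1 m) (0\<^sub>m m 1)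
        (mat m m (\<lambda>(i, j). A $$ (Suc i, Suc j))))"
    then have "i < Suc m" "j < Suc m"
      by auto
    then show "A $$ (i, j) = four_block_mat (mat 1 1 (\<lambda>_. e)) (0\<^sub>m 1 m) (0\<^sub>m m 1)
        (mat m m (\<lambda>(i, j). A $$ (Suc i, Suc j))) $$ (i, j)"
      using col0 row0 by (cases i; cases j) auto
  qed (use A in auto)
qed

lemma symmetric_mat_lower_right_block:
  assumes A: "A \<in> carrier_mat (Suc m) (Suc m)" and sym: "transpose_mat A = A"
  shows "transpose_mat (mat m m (\<lambda>(i, j). A $$ (Suc i, Suc j))) = mat m m (\<lambda>(i, j). A $$ (Suc i, Suc j))"
proof -
  have "A $$ (Suc j, Suc i) = A $$ (Suc i, Suc j)" if "i < m" "j < m" for i j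
  proof -
    have "transpose_mat A $$ (Suc i, Suc j) = A $$ (Suc j, Suc i)"
      using A that by (intro index_transpose_mat(1)) auto
    then show ?thesis
      using sym by simp
  qed
  then show ?thesis
    by (intro eq_matI) auto
qed

lemma symmetric_real_mat_deflation:
  fixes A :: "real mat"
  assumes A: "A \<in> carrier_mat (Suc m) (Suc m)" and sym: "transpose_mat A = A"
  obtains H e A' where "H \<in> carrier_mat (Suc m) (Suc m)" "transpose_mat H = H"
    "H * H = 1\<^sub>m (Suc m)" "A' \<in> carrier_mat m m" "transpose_mat A' = A'"
    "H * A * H = four_block_mat (mat 1 1 (\<lambda>_. e)) (0\<^sub>m 1 m) (0\<^sub>m m 1) A'"
proof -
  obtain e where "eigenvalue A e"
    using symmetric_real_mat_has_eigenvalue[OF A sym] by auto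
  then obtain v where v: "v \<in> carrier_vec (Suc m)" "v \<bullet> v = 1" "A *\<^sub>v v = e \<cdot>\<^sub>v v"
    using real_eigenvalue_unit_eigenvector[OF A] by blast
  obtain H where H: "H \<in> carrier_mat (Suc m) (Suc m)" "transpose_mat H = H"
    "H * H = 1\<^sub>m (Suc m)" "H *\<^sub>v unit_vec (Suc m) 0 = v"
    using reflection_to_unit_vec[OF v(1,2)] by blast
  let ?B = "H * A * H"
  have B: "?B \<in> carrier_mat (Suc m) (Suc m)" and symB: "transpose_mat ?B = ?B"
    using H A symmetric_mat_conjugate[OF H(1,2) A sym] by simp_all
  have Hv: "H *\<^sub>v v = unit_vec (Suc m) 0"
    using H v by (metis assoc_mult_mat_vec one_mult_mat_vec unit_vec_carrier)
  have "?B *\<^sub>v unit_vec (Suc m) 0 = (H * A) *\<^sub>v (H *\<^sub>v unit_vec (Suc m) 0)"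
    using H A by (intro assoc_mult_mat_vec) auto
  also have "\<dots> = H *\<^sub>v (A *\<^sub>v v)"
    using H A v by simp
  also have "\<dots> = e \<cdot>\<^sub>v unit_vec (Suc m) 0"
    using H v by (simp add: mult_mat_vec Hv)
  finally have block: "?B = four_block_mat (mat 1 1 (\<lambda>_. e)) (0\<^sub>m 1 m) (0\<^sub>m m 1)
      (mat m m (\<lambda>(i, j). ?B $$ (Suc i, Suc j)))"
    by (rule symmetric_mat_eigenvector_block[OF B symB])
  show ?thesis
    by (rule that[OF H(1-3) _ symmetric_mat_lower_right_block[OF B symB] block]) simp
qed

lemma mult_mat_assoc_sandwich:
  fixes H V D W :: "'a :: semiring_0 mat"
  assumes H: "H \<in> carrier_mat n n" and V: "V \<in> carrier_mat n n" and D: "D \<in> carrier_mat n n"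
    and W: "W \<in> carrier_mat n n"
  shows "H * (V * D * W) * H = H * V * D * (W * H)"
proof -
  have VD: "V * D \<in> carrier_mat n n"
    using V D by simp
  have "H * V * D * (W * H) = H * (V * D) * (W * H)"
    by (simp only: assoc_mult_mat[OF H V D])
  also have "\<dots> = H * (V * D * (W * H))"
    by (rule assoc_mult_mat[OF H VD mult_carrier_mat[OF W H]])
  also have "V * D * (W * H) = V * D * W * H"
    by (rule assoc_mult_mat[OF VD W H, symmetric])
  also have "H * (V * D * W * H) = H * (V * D * W) * H"
    by (rule assoc_mult_mat[OF H _ H, symmetric]) (use VD W in simp)
  finally show ?thesis ..
qed

lemma involutive_conjugation_cancel:
  fixes H A :: "'a :: semiring_1 mat"
  assumes H: "H \<in> carrier_mat n n" and A: "A \<in> carrier_mat n n" and HH: "H * H = 1\<^sub>m n"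
  shows "H * (H * A * H) * H = A"
proof -
  have HA: "H * A \<in> carrier_mat n n"
    using H A by simp
  have "H * (H * A * H) = H * (H * A) * H"
    by (rule assoc_mult_mat[OF H HA H, symmetric])
  also have "H * (H * A) = (H * H) * A"
    by (rule assoc_mult_mat[OF H H A, symmetric])
  finally have "H * (H * A * H) * H = A * H * H"
    using HH A by simp
  also have "\<dots> = A * (H * H)"
    by (rule assoc_mult_mat[OF A H H])
  finally show ?thesis
    using HH A by simp
qed

lemma reflection_conjugate_orthogonal_diagonalization:
  fixes H A V D :: "real mat"
  assumes H: "H \<in> carrier_mat n n" "transpose_mat H = H" "H * H = 1\<^sub>m n"
    and A: "A \<in> carrier_mat n n" and V: "V \<in> carrier_mat n n" "transpose_mat V * V = 1\<^sub>m n"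
    and D: "D \<in> carrier_mat n n" and HAH: "H * A * H = V * D * transpose_mat V"
  shows "transpose_mat (H * V) * (H * V) = 1\<^sub>m n"
    and "A = (H * V) * D * transpose_mat (H * V)"
proof -
  have UT: "transpose_mat (H * V) = transpose_mat V * H"
    using H V by (simp add: transpose_mult[of _ n n])
  have "transpose_mat (H * V) * (H * V) = transpose_mat V * (H * (H * V))"
    unfolding UT using H V by (intro assoc_mult_mat) auto
  also have "H * (H * V) = V"
    using assoc_mult_mat[OF H(1) H(1) V(1)] H(3) V by simp
  finally show "transpose_mat (H * V) * (H * V) = 1\<^sub>m n"
    using V(2) by simp
  have "A = H * (H * A * H) * H"
    using involutive_conjugation_cancel[OF H(1) A H(3)] by simp
  also have "\<dots> = H * V * D * (transpose_mat V * H)"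
    unfolding HAH using mult_mat_assoc_sandwich[OF H(1) V(1) D, of "transpose_mat V"] V by simp
  finally show "A = (H * V) * D * transpose_mat (H * V)"
    unfolding UT .
qed

lemma block_diag_orthogonal_conjugate:
  fixes U' D' :: "real mat"
  assumes U': "U' \<in> carrier_mat m m" "transpose_mat U' * U' = 1\<^sub>m m" and D': "D' \<in> carrier_mat m m"
    and V_def: "V = four_block_mat (1\<^sub>m 1) (0\<^sub>m 1 m) (0\<^sub>m m 1) U'"
  shows "V \<in> carrier_mat (Suc m) (Suc m)" and "transpose_mat V * V = 1\<^sub>m (Suc m)"
    and "V * four_block_mat (mat 1 1 (\<lambda>_. e)) (0\<^sub>m 1 m) (0\<^sub>m m 1) D' * transpose_mat V
      = four_block_mat (mat 1 1 (\<lambda>_. e)) (0\<^sub>m 1 m) (0\<^sub>m m 1) (U' * D' * transpose_mat U')"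
proof -
  have VT: "transpose_mat V = four_block_mat (1\<^sub>m 1) (0\<^sub>m 1 m) (0\<^sub>m m 1) (transpose_mat U')"
    unfolding V_def using U' by (simp add: four_block_diag_transpose)
  show "V \<in> carrier_mat (Suc m) (Suc m)"
  proof -
    have "four_block_mat (1\<^sub>m 1) (0\<^sub>m 1 m) (0\<^sub>m m 1) U' \<in> carrier_mat (1 + m) (1 + m)"
      using U'(1) by (intro four_block_carrier_mat) simp_all
    then show ?thesis
      unfolding V_def by simp
  qed
  show "transpose_mat V * V = 1\<^sub>m (Suc m)"
    unfolding VT unfolding V_def using U' four_block_one_mat[of 1 m] by (simp add: four_block_diag_mult)
  show "V * four_block_mat (mat 1 1 (\<lambda>_. e)) (0\<^sub>m 1 m) (0\<^sub>m m 1) D' * transpose_mat V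
      = four_block_mat (mat 1 1 (\<lambda>_. e)) (0\<^sub>m 1 m) (0\<^sub>m m 1) (U' * D' * transpose_mat U')"
    unfolding VT unfolding V_def using U' D' by (simp add: four_block_diag_mult)
qed

theorem real_symmetric_mat_orthogonal_diagonalization:
  fixes A :: "real mat"
  assumes "A \<in> carrier_mat m m" and "transpose_mat A = A"
  shows "\<exists>U D. U \<in> carrier_mat m m \<and> transpose_mat U * U = 1\<^sub>m m \<and>
    D \<in> carrier_mat m m \<and> diagonal_mat D \<and> A = U * D * transpose_mat U"
  using assms
proof (induction m arbitrary: A)
  case 0
  then show ?case
    by (intro exI[of _ "1\<^sub>m 0"]) (auto simp: diagonal_mat_def intro!: eq_matI)
next
  case (Suc m)
  obtain H e A' where H: "H \<in> carrier_mat (Suc m) (Suc m)" "transpose_mat H = H"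
    "H * H = 1\<^sub>m (Suc m)" and A': "A' \<in> carrier_mat m m" "transpose_mat A' = A'"
    and HAH: "H * A * H = four_block_mat (mat 1 1 (\<lambda>_. e)) (0\<^sub>m 1 m) (0\<^sub>m m 1) A'"
    using symmetric_real_mat_deflation[OF Suc.prems] by metis
  obtain U' D' where U': "U' \<in> carrier_mat m m" "transpose_mat U' * U' = 1\<^sub>m m"
    and D': "D' \<in> carrier_mat m m" "diagonal_mat D'" "A' = U' * D' * transpose_mat U'"
    using Suc.IH[OF A'] by blast
  define V where "V = four_block_mat (1\<^sub>m 1) (0\<^sub>m 1 m) (0\<^sub>m m 1) U'"
  define D where "D = four_block_mat (mat 1 1 (\<lambda>_. e)) (0\<^sub>m 1 m) (0\<^sub>m m 1) D'"
  note V = block_diag_orthogonal_conjugate[OF U' D'(1) V_def]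
  have D: "D \<in> carrier_mat (Suc m) (Suc m)" "diagonal_mat D"
    unfolding D_def using D'(1,2) by (auto simp: diagonal_mat_def)
  have "H * A * H = V * D * transpose_mat V"
    unfolding HAH D_def V(3) D'(3) ..
  note UD = reflection_conjugate_orthogonal_diagonalization[OF H Suc.prems(1) V(1,2) D(1) this]
  have "H * V \<in> carrier_mat (Suc m) (Suc m)"
    using H(1) V(1) by simp
  then show ?case
    using UD D by blast
qed

section \<open>Rayleigh quotient bounds for the second smallest eigenvalue\<close>

lemma proots_linear_factors: "proots (\<Prod>a\<leftarrow>xs. [:- a, 1:]) = mset (xs :: real list)"
proof (induction xs)
  case (Cons a xs)
  have "(\<Prod>a\<leftarrow>xs. [:- a, 1:]) \<noteq> (0 :: real poly)"
    by (auto simp: prod_list_zero_iff)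
  then have "proots ([:- a, 1:] * (\<Prod>a\<leftarrow>xs. [:- a, 1:])) = {#a#} + mset xs"
    using Cons proots_linear_factor[of "- a"] by (subst proots_mult) auto
  then show ?case
    by simp
qed simp

lemma eigs_asc_orthogonal_diagonalization:
  fixes A :: "real mat"
  assumes A: "A \<in> carrier_mat m m" and U: "U \<in> carrier_mat m m" and UTU: "transpose_mat U * U = 1\<^sub>m m"
    and D: "D \<in> carrier_mat m m" "diagonal_mat D" and AU: "A = U * D * transpose_mat U"
  shows "eigs_asc A = sort (map (\<lambda>i. D $$ (i, i)) [0..<m])"
proof -
  have "U * transpose_mat U = 1\<^sub>m m"
    using mat_mult_left_right_inverse[OF _ U UTU] U by simp
  then have "similar_mat A D"
    using A U D AU UTU by (intro similar_matI[of A D U "transpose_mat U" m]) auto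
  then have "char_poly A = char_poly D"
    by (rule char_poly_similar)
  also have "\<dots> = (\<Prod>a\<leftarrow>diag_mat D. [:- a, 1:])"
    using D by (intro char_poly_upper_triangular) (auto simp: diagonal_mat_def upper_triangular_def)
  finally have "eigs_asc A = sort (diag_mat D)"
    unfolding eigs_asc_def by (simp add: proots_linear_factors)
  then show ?thesis
    using D(1) by (simp add: diag_mat_def)
qed

lemma orthogonal_diagonalization_quadratic_form:
  fixes A :: "real mat"
  assumes U: "U \<in> carrier_mat m m" and UTU: "transpose_mat U * U = 1\<^sub>m m"
    and D: "D \<in> carrier_mat m m" "diagonal_mat D" and AU: "A = U * D * transpose_mat U"
    and w: "w \<in> carrier_vec m"
  shows "(U *\<^sub>v w) \<bullet> (U *\<^sub>v w) = (\<Sum>i<m. (w $ i)\<^sup>2)"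
    and "(U *\<^sub>v w) \<bullet> (A *\<^sub>v (U *\<^sub>v w)) = (\<Sum>i<m. D $$ (i, i) * (w $ i)\<^sup>2)"
proof -
  have UTUw: "transpose_mat U *\<^sub>v (U *\<^sub>v w) = w"
    using U w UTU by (metis assoc_mult_mat_vec one_mult_mat_vec transpose_carrier_mat)
  have shift: "(U *\<^sub>v w) \<bullet> (U *\<^sub>v x) = w \<bullet> x" if "x \<in> carrier_vec m" for x
    using transpose_vec_mult_scalar[OF U that, of "U *\<^sub>v w"] U w UTUw by simp
  show "(U *\<^sub>v w) \<bullet> (U *\<^sub>v w) = (\<Sum>i<m. (w $ i)\<^sup>2)"
    using shift[OF w] w by (simp add: scalar_prod_def lessThan_atLeast0 power2_eq_square)
  have "A *\<^sub>v (U *\<^sub>v w) = U *\<^sub>v (D *\<^sub>v w)"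
    unfolding AU using U D w UTUw by (simp add: assoc_mult_mat_vec[of _ m m _ m])
  moreover have "(D *\<^sub>v w) $ i = D $$ (i, i) * w $ i" if "i < m" for i
  proof -
    have "(D *\<^sub>v w) $ i = (\<Sum>j<m. D $$ (i, j) * w $ j)"
      using D w that by (simp add: scalar_prod_def lessThan_atLeast0)
    also have "\<dots> = (\<Sum>j<m. if j = i then D $$ (i, i) * w $ i else 0)"
      using D that by (intro sum.cong) (auto simp: diagonal_mat_def)
    finally show ?thesis
      using that by simp
  qed
  ultimately show "(U *\<^sub>v w) \<bullet> (A *\<^sub>v (U *\<^sub>v w)) = (\<Sum>i<m. D $$ (i, i) * (w $ i)\<^sup>2)"
    using shift[of "D *\<^sub>v w"] w D
    by (simp add: scalar_prod_def lessThan_atLeast0 power2_eq_square algebra_simps)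
qed

lemma orthogonal_diagonalization_rayleigh_le:
  fixes A :: "real mat"
  assumes U: "U \<in> carrier_mat m m" "transpose_mat U * U = 1\<^sub>m m"
    and D: "D \<in> carrier_mat m m" "diagonal_mat D" and AU: "A = U * D * transpose_mat U"
    and w: "w \<in> carrier_vec m" and le: "\<And>i. i < m \<Longrightarrow> w $ i \<noteq> 0 \<Longrightarrow> D $$ (i, i) \<le> lam"
  shows "(U *\<^sub>v w) \<bullet> (A *\<^sub>v (U *\<^sub>v w)) \<le> lam * ((U *\<^sub>v w) \<bullet> (U *\<^sub>v w))"
proof -
  have "(\<Sum>i<m. D $$ (i, i) * (w $ i)\<^sup>2) \<le> (\<Sum>i<m. lam * (w $ i)\<^sup>2)"
  proof (rule sum_mono)
    fix i assume "i \<in> {..<m}"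
    then show "D $$ (i, i) * (w $ i)\<^sup>2 \<le> lam * (w $ i)\<^sup>2"
      using le[of i] by (cases "w $ i = 0") (auto intro: mult_right_mono)
  qed
  then show ?thesis
    unfolding orthogonal_diagonalization_quadratic_form[OF U D AU w] by (simp add: sum_distrib_left)
qed

lemma orthogonal_diagonalization_rayleigh_ge:
  fixes A :: "real mat"
  assumes U: "U \<in> carrier_mat m m" "transpose_mat U * U = 1\<^sub>m m"
    and D: "D \<in> carrier_mat m m" "diagonal_mat D" and AU: "A = U * D * transpose_mat U"
    and w: "w \<in> carrier_vec m" and ge: "\<And>i. i < m \<Longrightarrow> w $ i \<noteq> 0 \<Longrightarrow> lam \<le> D $$ (i, i)"
  shows "lam * ((U *\<^sub>v w) \<bullet> (U *\<^sub>v w)) \<le> (U *\<^sub>v w) \<bullet> (A *\<^sub>v (U *\<^sub>v w))"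
proof -
  have "(\<Sum>i<m. lam * (w $ i)\<^sup>2) \<le> (\<Sum>i<m. D $$ (i, i) * (w $ i)\<^sup>2)"
  proof (rule sum_mono)
    fix i assume "i \<in> {..<m}"
    then show "lam * (w $ i)\<^sup>2 \<le> D $$ (i, i) * (w $ i)\<^sup>2"
      using ge[of i] by (cases "w $ i = 0") (auto intro: mult_right_mono)
  qed
  then show ?thesis
    unfolding orthogonal_diagonalization_quadratic_form[OF U D AU w] by (simp add: sum_distrib_left)
qed

lemma length_filter_sort: "length (filter P (sort xs)) = length (filter P xs)"
  by (metis mset_filter mset_sort size_mset)

lemma sort_map_upt_nth_1_ge_two_values:
  fixes f :: "nat \<Rightarrow> 'a :: linorder"
  assumes "2 \<le> m"
  obtains i j where "i < m" "j < m" "i \<noteq> j"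
    "f i \<le> sort (map f [0..<m]) ! 1" "f j \<le> sort (map f [0..<m]) ! 1"
proof -
  obtain a b t where s: "sort (map f [0..<m]) = a # b # t"
    using assms by (metis length_map length_upt length_sort diff_zero Suc_le_length_iff numeral_2_eq_2)
  define S where "S = {i. i < m \<and> f i \<le> b}"
  have "a \<le> b"
    using sorted_sort[of "map f [0..<m]"] unfolding s by simp
  then have "2 \<le> length (filter (\<lambda>y. y \<le> b) (sort (map f [0..<m])))"
    unfolding s by simp
  then have "2 \<le> length (filter (\<lambda>y. y \<le> b) (map f [0..<m]))"
    by (simp only: length_filter_sort)
  then have "\<not> card S \<le> Suc 0"
    unfolding S_def length_filter_conv_card by (simp cong: conj_cong)
  moreover have "finite S"
    unfolding S_def by simp
  ultimately obtain i j where "i \<in> S" "j \<in> S" "i \<noteq> j"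
    using card_le_Suc0_iff_eq by blast
  then show ?thesis
    using that[of i j] s unfolding S_def by simp
qed

lemma sort_map_upt_nth_1_le_all_but_one:
  fixes f :: "nat \<Rightarrow> 'a :: linorder"
  assumes "2 \<le> m"
  obtains i0 where "i0 < m" "\<And>i. i < m \<Longrightarrow> i \<noteq> i0 \<Longrightarrow> sort (map f [0..<m]) ! 1 \<le> f i"
proof -
  obtain a b t where s: "sort (map f [0..<m]) = a # b # t"
    using assms by (metis length_map length_upt length_sort diff_zero Suc_le_length_iff numeral_2_eq_2)
  define T where "T = {i. i < m \<and> f i < b}"
  have "\<forall>y\<in>set t. b \<le> y"
    using sorted_sort[of "map f [0..<m]"] unfolding s by simp
  then have "length (filter (\<lambda>y. y < b) (sort (map f [0..<m]))) \<le> Suc 0"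
    unfolding s by (simp add: filter_empty_conv not_less)
  then have "length (filter (\<lambda>y. y < b) (map f [0..<m])) \<le> Suc 0"
    by (simp only: length_filter_sort)
  then have "card T \<le> Suc 0"
    unfolding T_def length_filter_conv_card by (simp cong: conj_cong)
  moreover have "finite T"
    unfolding T_def by simp
  ultimately have T: "\<forall>i\<in>T. \<forall>j\<in>T. i = j"
    using card_le_Suc0_iff_eq by blast
  obtain i0 where i0: "i0 < m" "T \<subseteq> {i0}"
  proof (cases "T = {}")
    case True
    then show ?thesis
      using that[of 0] assms by simp
  next
    case False
    then obtain i0 where "i0 \<in> T"
      by blast
    then show ?thesis
      using that T unfolding T_def by blast
  qed
  have "b \<le> f i" if "i < m" "i \<noteq> i0" for i
    using i0 that unfolding T_def by (auto simp: not_less)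
  then show ?thesis
    using that[OF i0(1)] s by simp
qed

lemma sum_two_points:
  fixes a b :: "'a :: comm_monoid_add" and m :: nat
  assumes "i0 \<noteq> i1" "i0 < m" "i1 < m"
  shows "(\<Sum>i<m. if i = i0 then a else if i = i1 then b else 0) = a + b"
proof -
  have "(\<Sum>i<m. if i = i0 then a else if i = i1 then b else 0)
      = (\<Sum>i<m. (if i = i0 then a else 0) + (if i = i1 then b else 0))"
    using assms by (intro sum.cong) auto
  then show ?thesis
    using assms by (simp add: sum.distrib)
qed

lemma homogeneous_linear_eq_nontrivial_solution:
  fixes p q :: "'a :: idom"
  obtains a b where "a \<noteq> 0 \<or> b \<noteq> 0" "a * p + b * q = 0"
proof (cases "p = 0 \<and> q = 0")
  case True
  then show ?thesis
    using that[of 1 0] by simp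
next
  case False
  then show ?thesis
    using that[of q "- p"] by (auto simp: algebra_simps)
qed

lemma vec_orthogonal_on_two_coordinates:
  fixes g :: "real vec"
  assumes g: "g \<in> carrier_vec m" and i: "i0 < m" "i1 < m" "i0 \<noteq> i1"
  obtains w where "w \<in> carrier_vec m" "w \<noteq> 0\<^sub>v m" "w \<bullet> g = 0"
    "\<And>i. i < m \<Longrightarrow> w $ i \<noteq> 0 \<Longrightarrow> i = i0 \<or> i = i1"
proof -
  obtain a b where ab: "a \<noteq> 0 \<or> b \<noteq> 0" "a * g $ i0 + b * g $ i1 = 0"
    using homogeneous_linear_eq_nontrivial_solution .
  define w where "w = vec m (\<lambda>i. if i = i0 then a else if i = i1 then b else 0)"
  have "w \<bullet> g = (\<Sum>i<m. if i = i0 then a * g $ i0 else if i = i1 then b * g $ i1 else 0)"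
    unfolding w_def scalar_prod_def using g by (auto simp: lessThan_atLeast0 intro!: sum.cong)
  also have "\<dots> = 0"
    unfolding sum_two_points[OF i(3,1,2)] by (rule ab(2))
  finally have "w \<bullet> g = 0" .
  moreover have "w $ i0 = a" "w $ i1 = b"
    using i unfolding w_def by auto
  then have "w \<noteq> 0\<^sub>v m"
    using ab(1) i by auto
  moreover have "i = i0 \<or> i = i1" if "i < m" "w $ i \<noteq> 0" for i
    using that unfolding w_def by (auto split: if_splits)
  ultimately show ?thesis
    using that[of w] unfolding w_def by simp
qed

lemma second_eigenvalue_rayleigh_witness:
  fixes A :: "real mat"
  assumes A: "A \<in> carrier_mat m m" and sym: "transpose_mat A = A" and m: "2 \<le> m"
    and c: "c \<in> carrier_vec m"
  obtains x where "x \<in> carrier_vec m" "x \<noteq> 0\<^sub>v m" "x \<bullet> c = 0"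
    "x \<bullet> (A *\<^sub>v x) \<le> eigs_asc A ! 1 * (x \<bullet> x)"
proof -
  obtain U D where U: "U \<in> carrier_mat m m" "transpose_mat U * U = 1\<^sub>m m"
    and D: "D \<in> carrier_mat m m" "diagonal_mat D" and AU: "A = U * D * transpose_mat U"
    using real_symmetric_mat_orthogonal_diagonalization[OF A sym] by blast
  obtain i0 i1 where i: "i0 < m" "i1 < m" "i0 \<noteq> i1"
    and Di: "D $$ (i0, i0) \<le> eigs_asc A ! 1" "D $$ (i1, i1) \<le> eigs_asc A ! 1"
    using sort_map_upt_nth_1_ge_two_values[OF m, of "\<lambda>i. D $$ (i, i)"]
    unfolding eigs_asc_orthogonal_diagonalization[OF A U D AU] by blast
  \<comment> \<open>U w combines eigenvectors of two eigenvalues that are at most the second smallest one.\<close>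
  obtain w where w: "w \<in> carrier_vec m" "w \<noteq> 0\<^sub>v m" "w \<bullet> (transpose_mat U *\<^sub>v c) = 0"
    and supp: "\<And>i. i < m \<Longrightarrow> w $ i \<noteq> 0 \<Longrightarrow> i = i0 \<or> i = i1"
    using vec_orthogonal_on_two_coordinates[OF _ i, of "transpose_mat U *\<^sub>v c"] U c by auto
  have x: "U *\<^sub>v w \<in> carrier_vec m"
    using U w by simp
  have "(U *\<^sub>v w) \<bullet> c = w \<bullet> (transpose_mat U *\<^sub>v c)"
    using transpose_vec_mult_scalar[OF U(1) w(1) c] comm_scalar_prod[OF x c]
      comm_scalar_prod[OF w(1), of "transpose_mat U *\<^sub>v c"] U c by simp
  moreover have "(U *\<^sub>v w) \<bullet> (U *\<^sub>v w) = w \<bullet> w"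
    using orthogonal_diagonalization_quadratic_form(1)[OF U D AU w(1)] w(1)
    by (simp add: scalar_prod_def lessThan_atLeast0 power2_eq_square)
  then have "U *\<^sub>v w \<noteq> 0\<^sub>v m"
    using real_vec_square_pos_iff[OF x] real_vec_square_pos_iff[OF w(1)] w(2) by simp
  moreover have "(U *\<^sub>v w) \<bullet> (A *\<^sub>v (U *\<^sub>v w)) \<le> eigs_asc A ! 1 * ((U *\<^sub>v w) \<bullet> (U *\<^sub>v w))"
    using Di supp by (intro orthogonal_diagonalization_rayleigh_le[OF U D AU w(1)]) blast
  ultimately show ?thesis
    using that x w(3) by simp
qed

lemma second_eigenvalue_le_of_plane_rayleigh_bound:
  fixes A :: "real mat"
  assumes A: "A \<in> carrier_mat m m" and sym: "transpose_mat A = A" and m: "2 \<le> m"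
    and x: "x \<in> carrier_vec m" and y: "y \<in> carrier_vec m"
    and indep: "\<And>a b. a \<cdot>\<^sub>v x + b \<cdot>\<^sub>v y = 0\<^sub>v m \<Longrightarrow> a = 0 \<and> b = 0"
    and bound: "\<And>a b. (a \<cdot>\<^sub>v x + b \<cdot>\<^sub>v y) \<bullet> (A *\<^sub>v (a \<cdot>\<^sub>v x + b \<cdot>\<^sub>v y))
      \<le> c * ((a \<cdot>\<^sub>v x + b \<cdot>\<^sub>v y) \<bullet> (a \<cdot>\<^sub>v x + b \<cdot>\<^sub>v y))"
  shows "eigs_asc A ! 1 \<le> c"
proof -
  obtain U D where U: "U \<in> carrier_mat m m" "transpose_mat U * U = 1\<^sub>m m"
    and D: "D \<in> carrier_mat m m" "diagonal_mat D" and AU: "A = U * D * transpose_mat U"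
    using real_symmetric_mat_orthogonal_diagonalization[OF A sym] by blast
  obtain i0 where i0: "i0 < m" and big: "\<And>i. i < m \<Longrightarrow> i \<noteq> i0 \<Longrightarrow> eigs_asc A ! 1 \<le> D $$ (i, i)"
    using sort_map_upt_nth_1_le_all_but_one[OF m, of "\<lambda>i. D $$ (i, i)"]
    unfolding eigs_asc_orthogonal_diagonalization[OF A U D AU] by blast
  \<comment> \<open>Some nonzero z in the plane has no component along the eigenvector of the only
    eigenvalue that may lie below the second smallest one.\<close>
  obtain a b where ab: "a \<noteq> 0 \<or> b \<noteq> 0"
    "a * (transpose_mat U *\<^sub>v x) $ i0 + b * (transpose_mat U *\<^sub>v y) $ i0 = 0"
    using homogeneous_linear_eq_nontrivial_solution .
  define z where "z = a \<cdot>\<^sub>v x + b \<cdot>\<^sub>v y"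
  have z: "z \<in> carrier_vec m" "z \<noteq> 0\<^sub>v m"
    unfolding z_def using x y indep ab(1) by auto
  define w where "w = transpose_mat U *\<^sub>v z"
  have w: "w \<in> carrier_vec m" "w $ i0 = 0"
    unfolding w_def z_def using U x y i0 ab(2) by (simp_all add: mult_add_distrib_mat_vec mult_mat_vec)
  have "U * transpose_mat U = 1\<^sub>m m"
    using mat_mult_left_right_inverse[OF _ U(1) U(2)] U(1) by simp
  then have zw: "z = U *\<^sub>v w"
    unfolding w_def using U z by (metis assoc_mult_mat_vec one_mult_mat_vec transpose_carrier_mat)
  have "eigs_asc A ! 1 * (z \<bullet> z) \<le> z \<bullet> (A *\<^sub>v z)"
    unfolding zw using big w(2) by (intro orthogonal_diagonalization_rayleigh_ge[OF U D AU w(1)]) metis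
  also have "\<dots> \<le> c * (z \<bullet> z)"
    unfolding z_def by (rule bound)
  finally show ?thesis
    using real_vec_square_pos_iff[OF z(1)] z(2) by simp
qed

lemma second_eigenvalue_le_of_kernel_vector:
  fixes A :: "real mat"
  assumes A: "A \<in> carrier_mat m m" and sym: "transpose_mat A = A" and m: "2 \<le> m"
    and x: "x \<in> carrier_vec m" "x \<noteq> 0\<^sub>v m" "A *\<^sub>v x = 0\<^sub>v m"
    and y: "y \<in> carrier_vec m" "y \<noteq> 0\<^sub>v m" "x \<bullet> y = 0"
    and yAy: "y \<bullet> (A *\<^sub>v y) \<le> c * (y \<bullet> y)" and c: "0 \<le> c"
  shows "eigs_asc A ! 1 \<le> c"
proof (rule second_eigenvalue_le_of_plane_rayleigh_bound[OF A sym m x(1) y(1)])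
  have xx: "x \<bullet> x > 0" and yy: "y \<bullet> y > 0"
    using real_vec_square_pos_iff x y by blast+
  have yx: "y \<bullet> x = 0"
    using comm_scalar_prod[OF x(1) y(1)] y(3) by simp
  have xAy: "x \<bullet> (A *\<^sub>v y) = 0"
    using transpose_vec_mult_scalar[OF A y(1) x(1)] sym x(3) y(1) by simp
  fix a b
  show "a \<cdot>\<^sub>v x + b \<cdot>\<^sub>v y = 0\<^sub>v m \<Longrightarrow> a = 0 \<and> b = 0"
  proof -
    assume z: "a \<cdot>\<^sub>v x + b \<cdot>\<^sub>v y = 0\<^sub>v m"
    have "a * (x \<bullet> x) = x \<bullet> (a \<cdot>\<^sub>v x + b \<cdot>\<^sub>v y)" and "b * (y \<bullet> y) = y \<bullet> (a \<cdot>\<^sub>v x + b \<cdot>\<^sub>v y)"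
      using x y yx by (simp_all add: scalar_prod_add_distrib[of _ m])
    then show "a = 0 \<and> b = 0"
      unfolding z using x y xx yy by simp
  qed
  have "A *\<^sub>v (a \<cdot>\<^sub>v x + b \<cdot>\<^sub>v y) = a \<cdot>\<^sub>v (A *\<^sub>v x) + b \<cdot>\<^sub>v (A *\<^sub>v y)"
    using A x y by (simp add: mult_add_distrib_mat_vec mult_mat_vec)
  also have "\<dots> = b \<cdot>\<^sub>v (A *\<^sub>v y)"
    using A x(3) y by (intro eq_vecI) auto
  finally have "(a \<cdot>\<^sub>v x + b \<cdot>\<^sub>v y) \<bullet> (A *\<^sub>v (a \<cdot>\<^sub>v x + b \<cdot>\<^sub>v y)) = b * b * (y \<bullet> (A *\<^sub>v y))"
    using A x y xAy by (simp add: add_scalar_prod_distrib[of _ m])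
  also have "\<dots> \<le> b * b * (c * (y \<bullet> y))"
    using yAy by (simp add: mult_left_mono)
  also have "\<dots> \<le> c * ((a \<cdot>\<^sub>v x + b \<cdot>\<^sub>v y) \<bullet> (a \<cdot>\<^sub>v x + b \<cdot>\<^sub>v y))"
    using x y yx mult_nonneg_nonneg[OF zero_le_square[of a] mult_nonneg_nonneg[OF c less_imp_le[OF xx]]]
    by (simp add: scalar_prod_add_distrib[of _ m] add_scalar_prod_distrib[of _ m] algebra_simps)
  finally show "(a \<cdot>\<^sub>v x + b \<cdot>\<^sub>v y) \<bullet> (A *\<^sub>v (a \<cdot>\<^sub>v x + b \<cdot>\<^sub>v y))
      \<le> c * ((a \<cdot>\<^sub>v x + b \<cdot>\<^sub>v y) \<bullet> (a \<cdot>\<^sub>v x + b \<cdot>\<^sub>v y))" .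
qed

lemma second_eigenvalue_nonneg:
  fixes A :: "real mat"
  assumes A: "A \<in> carrier_mat m m" and sym: "transpose_mat A = A" and m: "2 \<le> m"
    and psd: "\<And>x. x \<in> carrier_vec m \<Longrightarrow> 0 \<le> x \<bullet> (A *\<^sub>v x)"
  shows "0 \<le> eigs_asc A ! 1"
proof -
  obtain x where x: "x \<in> carrier_vec m" "x \<noteq> 0\<^sub>v m"
    and "x \<bullet> (A *\<^sub>v x) \<le> eigs_asc A ! 1 * (x \<bullet> x)"
    using second_eigenvalue_rayleigh_witness[OF A sym m zero_carrier_vec] by blast
  then have "0 \<le> eigs_asc A ! 1 * (x \<bullet> x)"
    using psd[OF x(1)] by linarith
  then show ?thesis
    using real_vec_square_pos_iff[OF x(1)] x(2) by (simp add: zero_le_mult_iff)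
qed

section \<open>Laplacians of the coupled network\<close>

lemma laplacian_carrier: "laplacian n E \<in> carrier_mat n n"
  unfolding laplacian_def by simp

lemma laplacian_index:
  assumes G: "simple_graph n E" and i: "i < n" and j: "j < n"
  shows "laplacian n E $$ (i, j) = (if i = j then (\<Sum>l<n. of_bool (E i l)) else 0) - of_bool (E i j)"
proof -
  have "real (card {l. l < n \<and> E i l}) = (\<Sum>l<n. of_bool (E i l))"
    by (simp add: lessThan_def Collect_conj_eq)
  moreover have "\<not> E i i"
    using G unfolding simple_graph_def by auto
  ultimately show ?thesis
    using i j unfolding laplacian_def by auto
qed

lemma laplacian_transpose:
  assumes G: "simple_graph n E"
  shows "transpose_mat (laplacian n E) = laplacian n E"
proof -
  have "E i j = E j i" for i j
    using G unfolding simple_graph_def by auto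
  then show ?thesis
    using laplacian_carrier[of n E] by (intro eq_matI) (auto simp: laplacian_index[OF G])
qed

lemma laplacian_mult_vec:
  assumes G: "simple_graph n E" and x: "x \<in> carrier_vec n" and i: "i < n"
  shows "(laplacian n E *\<^sub>v x) $ i = (\<Sum>j<n. of_bool (E i j) * (x $ i - x $ j))"
proof -
  have "(laplacian n E *\<^sub>v x) $ i = (\<Sum>j<n. laplacian n E $$ (i, j) * x $ j)"
    using i x laplacian_carrier[of n E] by (simp add: scalar_prod_def lessThan_atLeast0)
  also have "\<dots> = (\<Sum>j<n. (if i = j then (\<Sum>l<n. of_bool (E i l)) * x $ i else 0) - of_bool (E i j) * x $ j)"
    using i by (intro sum.cong) (auto simp: laplacian_index[OF G] algebra_simps)
  also have "\<dots> = (\<Sum>j<n. of_bool (E i j) * (x $ i - x $ j))"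
    using i by (simp add: sum_subtractf sum_distrib_right right_diff_distrib)
  finally show ?thesis .
qed

lemma laplacian_mult_ones:
  assumes G: "simple_graph n E"
  shows "laplacian n E *\<^sub>v vec n (\<lambda>_. 1) = 0\<^sub>v n"
proof (rule eq_vecI)
  fix i assume "i < dim_vec (0\<^sub>v n :: real vec)"
  then show "(laplacian n E *\<^sub>v vec n (\<lambda>_. 1)) $ i = 0\<^sub>v n $ i"
    using laplacian_mult_vec[OF G _, of "vec n (\<lambda>_. 1)" i] by simp
qed (use laplacian_carrier[of n E] in simp)

lemma laplacian_quadratic_form:
  assumes G: "simple_graph n E" and x: "x \<in> carrier_vec n"
  shows "2 * (x \<bullet> (laplacian n E *\<^sub>v x)) = (\<Sum>i<n. \<Sum>j<n. of_bool (E i j) * (x $ i - x $ j)\<^sup>2)"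
proof -
  define S where "S = (\<Sum>i<n. \<Sum>j<n. of_bool (E i j) * (x $ i * x $ i - x $ i * x $ j))"
  define S' where "S' = (\<Sum>i<n. \<Sum>j<n. of_bool (E i j) * (x $ j * x $ j - x $ j * x $ i))"
  have "x \<bullet> (laplacian n E *\<^sub>v x) = (\<Sum>i<n. x $ i * (\<Sum>j<n. of_bool (E i j) * (x $ i - x $ j)))"
    using x laplacian_carrier[of n E]
    by (simp add: scalar_prod_def lessThan_atLeast0 laplacian_mult_vec[OF G x] del: index_mult_mat_vec)
  also have "\<dots> = S"
    unfolding S_def by (simp add: sum_distrib_left algebra_simps)
  finally have xLx: "x \<bullet> (laplacian n E *\<^sub>v x) = S" .
  have "E i j = E j i" for i j
    using G unfolding simple_graph_def by auto
  then have "S = S'"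
    unfolding S_def S'_def by (subst sum.swap) simp
  have "(\<Sum>i<n. \<Sum>j<n. of_bool (E i j) * (x $ i - x $ j)\<^sup>2)
      = (\<Sum>i<n. \<Sum>j<n. of_bool (E i j) * (x $ i * x $ i - x $ i * x $ j)
          + of_bool (E i j) * (x $ j * x $ j - x $ j * x $ i))"
    by (intro sum.cong refl) (simp add: power2_eq_square algebra_simps)
  also have "\<dots> = S + S'"
    unfolding S_def S'_def by (simp only: sum.distrib)
  finally show ?thesis
    unfolding xLx using \<open>S = S'\<close> by simp
qed

lemma laplacian_psd:
  assumes G: "simple_graph n E" and x: "x \<in> carrier_vec n"
  shows "0 \<le> x \<bullet> (laplacian n E *\<^sub>v x)"
proof -
  have "0 \<le> (\<Sum>i<n. \<Sum>j<n. of_bool (E i j) * (x $ i - x $ j)\<^sup>2)"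
    by (intro sum_nonneg) simp
  then show ?thesis
    using laplacian_quadratic_form[OF G x] by simp
qed

lemma laplacian_second_eigenvalue_nonneg:
  assumes "simple_graph n E" and "2 \<le> n"
  shows "0 \<le> eigs_asc (laplacian n E) ! 1"
  by (rule second_eigenvalue_nonneg[OF laplacian_carrier laplacian_transpose[OF assms(1)] assms(2)
        laplacian_psd[OF assms(1)]])

lemma sum_zero_one_eq_card:
  fixes f :: "nat \<Rightarrow> real"
  assumes "\<And>j. j < n \<Longrightarrow> f j = 0 \<or> f j = 1"
  shows "(\<Sum>j<n. f j) = real (card {j. j < n \<and> f j = 1})"
proof -
  have "(\<Sum>j<n. f j) = (\<Sum>j<n. of_bool (f j = 1))"
    using assms by (intro sum.cong) auto
  then show ?thesis
    by (simp add: lessThan_def Collect_conj_eq)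
qed

lemma k_regular_01_carrier: "k_regular_01 n k B \<Longrightarrow> B \<in> carrier_mat n n"
  unfolding k_regular_01_def by simp

lemma k_regular_01_mult_ones:
  assumes kr: "k_regular_01 n k B"
  shows "B *\<^sub>v vec n (\<lambda>_. 1) = real k \<cdot>\<^sub>v vec n (\<lambda>_. 1)"
    and "transpose_mat B *\<^sub>v vec n (\<lambda>_. 1) = real k \<cdot>\<^sub>v vec n (\<lambda>_. 1)"
proof -
  have B: "B \<in> carrier_mat n n"
    using k_regular_01_carrier[OF kr] .
  have "(\<Sum>j<n. B $$ (i, j)) = real k" if "i < n" for i
    using kr that unfolding k_regular_01_def by (subst sum_zero_one_eq_card) auto
  then show "B *\<^sub>v vec n (\<lambda>_. 1) = real k \<cdot>\<^sub>v vec n (\<lambda>_. 1)"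
    using B by (intro eq_vecI) (auto simp: scalar_prod_def lessThan_atLeast0)
  have "(\<Sum>i<n. B $$ (i, j)) = real k" if "j < n" for j
    using kr that unfolding k_regular_01_def by (subst sum_zero_one_eq_card) auto
  then show "transpose_mat B *\<^sub>v vec n (\<lambda>_. 1) = real k \<cdot>\<^sub>v vec n (\<lambda>_. 1)"
    using B by (intro eq_vecI) (auto simp: scalar_prod_def lessThan_atLeast0)
qed

lemma smult_mat_mult_vec:
  fixes A :: "'a :: comm_ring mat"
  assumes "A \<in> carrier_mat nr n" and "v \<in> carrier_vec n"
  shows "(c \<cdot>\<^sub>m A) *\<^sub>v v = c \<cdot>\<^sub>v (A *\<^sub>v v)"
  using assms by (intro eq_vecI) (auto simp: smult_scalar_prod_distrib[of _ n])

lemma four_block_mat_quadratic_form_upper: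
  fixes A B C D :: "'a :: comm_ring mat"
  assumes A: "A \<in> carrier_mat n n" and B: "B \<in> carrier_mat n m" and C: "C \<in> carrier_mat m n"
    and D: "D \<in> carrier_mat m m" and v: "v \<in> carrier_vec n"
  shows "(v @\<^sub>v 0\<^sub>v m) \<bullet> (four_block_mat A B C D *\<^sub>v (v @\<^sub>v 0\<^sub>v m)) = v \<bullet> (A *\<^sub>v v)"
proof -
  have "four_block_mat A B C D *\<^sub>v (v @\<^sub>v 0\<^sub>v m) = (A *\<^sub>v v + B *\<^sub>v 0\<^sub>v m) @\<^sub>v (C *\<^sub>v v + D *\<^sub>v 0\<^sub>v m)"
    using A B C D v by (intro four_block_mat_mult_vec) auto
  moreover have "B *\<^sub>v 0\<^sub>v m = 0\<^sub>v n"
    using B by auto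
  ultimately show ?thesis
    using A B C D v by (simp add: scalar_prod_append[of _ n _ m])
qed

lemma four_block_mat_quadratic_form_lower:
  fixes A B C D :: "'a :: comm_ring mat"
  assumes A: "A \<in> carrier_mat n n" and B: "B \<in> carrier_mat n m" and C: "C \<in> carrier_mat m n"
    and D: "D \<in> carrier_mat m m" and v: "v \<in> carrier_vec m"
  shows "(0\<^sub>v n @\<^sub>v v) \<bullet> (four_block_mat A B C D *\<^sub>v (0\<^sub>v n @\<^sub>v v)) = v \<bullet> (D *\<^sub>v v)"
proof -
  have "four_block_mat A B C D *\<^sub>v (0\<^sub>v n @\<^sub>v v) = (A *\<^sub>v 0\<^sub>v n + B *\<^sub>v v) @\<^sub>v (C *\<^sub>v 0\<^sub>v n + D *\<^sub>v v)"
    using A B C D v by (intro four_block_mat_mult_vec) auto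
  moreover have "C *\<^sub>v 0\<^sub>v n = 0\<^sub>v m"
    using C by auto
  ultimately show ?thesis
    using A B C D v by (simp add: scalar_prod_append[of _ n _ m])
qed

lemma Qp_carrier:
  assumes "Q1 \<in> carrier_mat n n" "Q2 \<in> carrier_mat n n" "B \<in> carrier_mat n n"
  shows "Qp n k Q1 Q2 B p \<in> carrier_mat (n + n) (n + n)"
  using assms unfolding Qp_def by simp

lemma Qp_transpose:
  assumes Q1: "Q1 \<in> carrier_mat n n" "transpose_mat Q1 = Q1"
    and Q2: "Q2 \<in> carrier_mat n n" "transpose_mat Q2 = Q2" and B: "B \<in> carrier_mat n n"
  shows "transpose_mat (Qp n k Q1 Q2 B p) = Qp n k Q1 Q2 B p"
proof -
  have "transpose_mat (Q + (real k * p) \<cdot>\<^sub>m 1\<^sub>m n) = Q + (real k * p) \<cdot>\<^sub>m 1\<^sub>m n"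
    if "Q \<in> carrier_mat n n" "transpose_mat Q = Q" for Q :: "real mat"
    using that by (subst transpose_add) auto
  moreover have "transpose_mat (- (p \<cdot>\<^sub>m M)) = - (p \<cdot>\<^sub>m transpose_mat M)" for M :: "real mat"
    by (intro eq_matI) auto
  ultimately show ?thesis
    unfolding Qp_def using Q1 Q2 B by (subst transpose_four_block_mat) auto
qed

lemma Qp_mult_ones:
  assumes Q1: "Q1 \<in> carrier_mat n n" "Q1 *\<^sub>v vec n (\<lambda>_. 1) = 0\<^sub>v n"
    and Q2: "Q2 \<in> carrier_mat n n" "Q2 *\<^sub>v vec n (\<lambda>_. 1) = 0\<^sub>v n"
    and B: "B \<in> carrier_mat n n" "B *\<^sub>v vec n (\<lambda>_. 1) = real k \<cdot>\<^sub>v vec n (\<lambda>_. 1)"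
      "transpose_mat B *\<^sub>v vec n (\<lambda>_. 1) = real k \<cdot>\<^sub>v vec n (\<lambda>_. 1)"
  shows "Qp n k Q1 Q2 B p *\<^sub>v vec (n + n) (\<lambda>_. 1) = 0\<^sub>v (n + n)"
proof -
  let ?ones = "vec n (\<lambda>_. 1) :: real vec"
  have shifted: "(Q + (real k * p) \<cdot>\<^sub>m 1\<^sub>m n) *\<^sub>v ?ones = (real k * p) \<cdot>\<^sub>v ?ones"
    if "Q \<in> carrier_mat n n" "Q *\<^sub>v ?ones = 0\<^sub>v n" for Q
    using that by (simp add: add_mult_distrib_mat_vec[of _ n n] smult_mat_mult_vec[of _ n n])
  have coupling: "(- (p \<cdot>\<^sub>m M)) *\<^sub>v ?ones = - ((real k * p) \<cdot>\<^sub>v ?ones)"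
    if "M \<in> carrier_mat n n" "M *\<^sub>v ?ones = real k \<cdot>\<^sub>v ?ones" for M
    using that by (simp add: smult_mat_mult_vec[of _ n n] smult_smult_assoc mult.commute)
  have ones: "vec (n + n) (\<lambda>_. 1) = ?ones @\<^sub>v ?ones"
    by (intro eq_vecI) auto
  have "Qp n k Q1 Q2 B p *\<^sub>v vec (n + n) (\<lambda>_. 1)
      = ((real k * p) \<cdot>\<^sub>v ?ones + - ((real k * p) \<cdot>\<^sub>v ?ones)) @\<^sub>v (- ((real k * p) \<cdot>\<^sub>v ?ones) + (real k * p) \<cdot>\<^sub>v ?ones)"
    unfolding Qp_def ones using Q1 Q2 B shifted[OF Q1] shifted[OF Q2] coupling[OF B(1,2)] coupling[of "transpose_mat B"]
    by (subst four_block_mat_mult_vec[of _ n n]) auto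
  also have "\<dots> = 0\<^sub>v (n + n)"
    by (intro eq_vecI) auto
  finally show ?thesis .
qed

lemma Qp_quadratic_form:
  assumes Q1: "Q1 \<in> carrier_mat n n" and Q2: "Q2 \<in> carrier_mat n n" and B: "B \<in> carrier_mat n n"
    and v: "v \<in> carrier_vec n"
  shows "(v @\<^sub>v 0\<^sub>v n) \<bullet> (Qp n k Q1 Q2 B p *\<^sub>v (v @\<^sub>v 0\<^sub>v n)) = v \<bullet> (Q1 *\<^sub>v v) + real k * p * (v \<bullet> v)"
    and "(0\<^sub>v n @\<^sub>v v) \<bullet> (Qp n k Q1 Q2 B p *\<^sub>v (0\<^sub>v n @\<^sub>v v)) = v \<bullet> (Q2 *\<^sub>v v) + real k * p * (v \<bullet> v)"
proof -
  have shifted: "v \<bullet> ((Q + (real k * p) \<cdot>\<^sub>m 1\<^sub>m n) *\<^sub>v v) = v \<bullet> (Q *\<^sub>v v) + real k * p * (v \<bullet> v)"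
    if "Q \<in> carrier_mat n n" for Q :: "real mat"
    using that v
    by (simp add: add_mult_distrib_mat_vec[of _ n n] scalar_prod_add_distrib[of _ n] smult_mat_mult_vec[of _ n n])
  show "(v @\<^sub>v 0\<^sub>v n) \<bullet> (Qp n k Q1 Q2 B p *\<^sub>v (v @\<^sub>v 0\<^sub>v n)) = v \<bullet> (Q1 *\<^sub>v v) + real k * p * (v \<bullet> v)"
    unfolding Qp_def using Q1 Q2 B v shifted[OF Q1] by (subst four_block_mat_quadratic_form_upper) auto
  show "(0\<^sub>v n @\<^sub>v v) \<bullet> (Qp n k Q1 Q2 B p *\<^sub>v (0\<^sub>v n @\<^sub>v v)) = v \<bullet> (Q2 *\<^sub>v v) + real k * p * (v \<bullet> v)"
    unfolding Qp_def using Q1 Q2 B v shifted[OF Q2] by (subst four_block_mat_quadratic_form_lower) auto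
qed

section \<open>The transition threshold\<close>

lemma second_eigenvalue_Qp_le_of_test_vector:
  assumes G1: "simple_graph n E1" and G2: "simple_graph n E2" and kr: "k_regular_01 n k B"
    and n: "2 \<le> n" and y: "y \<in> carrier_vec (n + n)" "y \<noteq> 0\<^sub>v (n + n)" "vec (n + n) (\<lambda>_. 1) \<bullet> y = 0"
    and yQy: "y \<bullet> (Qp n k (laplacian n E1) (laplacian n E2) B p *\<^sub>v y) \<le> c * (y \<bullet> y)" and c: "0 \<le> c"
  shows "eigs_asc (Qp n k (laplacian n E1) (laplacian n E2) B p) ! 1 \<le> c"
proof (rule second_eigenvalue_le_of_kernel_vector[OF _ _ _ _ _ _ y yQy c])
  have B: "B \<in> carrier_mat n n"
    using k_regular_01_carrier[OF kr] .
  show "Qp n k (laplacian n E1) (laplacian n E2) B p \<in> carrier_mat (n + n) (n + n)"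
    using B by (intro Qp_carrier laplacian_carrier)
  show "transpose_mat (Qp n k (laplacian n E1) (laplacian n E2) B p) = Qp n k (laplacian n E1) (laplacian n E2) B p"
    using B by (intro Qp_transpose laplacian_carrier laplacian_transpose G1 G2)
  show "Qp n k (laplacian n E1) (laplacian n E2) B p *\<^sub>v vec (n + n) (\<lambda>_. 1) = 0\<^sub>v (n + n)"
    using B by (intro Qp_mult_ones laplacian_carrier laplacian_mult_ones G1 G2 k_regular_01_mult_ones[OF kr])
  show "vec (n + n) (\<lambda>_. 1) \<noteq> (0\<^sub>v (n + n) :: real vec)"
  proof
    assume "vec (n + n) (\<lambda>_. 1) = (0\<^sub>v (n + n) :: real vec)"
    then have "vec (n + n) (\<lambda>_. 1) $ 0 = (0\<^sub>v (n + n) :: real vec) $ 0"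
      by simp
    then show False
      using n by simp
  qed
qed (use n in simp_all)

lemma second_eigenvalue_Qp_le_upper_layer:
  assumes G1: "simple_graph n E1" and G2: "simple_graph n E2" and kr: "k_regular_01 n k B"
    and n: "2 \<le> n" and p: "0 \<le> p"
  shows "eigs_asc (Qp n k (laplacian n E1) (laplacian n E2) B p) ! 1
      \<le> eigs_asc (laplacian n E1) ! 1 + real k * p"
proof -
  let ?ones = "vec n (\<lambda>_. 1) :: real vec"
  obtain v where v: "v \<in> carrier_vec n" "v \<noteq> 0\<^sub>v n" "v \<bullet> ?ones = 0"
    "v \<bullet> (laplacian n E1 *\<^sub>v v) \<le> eigs_asc (laplacian n E1) ! 1 * (v \<bullet> v)"
    using second_eigenvalue_rayleigh_witness[OF laplacian_carrier laplacian_transpose[OF G1] n, of ?ones]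
    by auto
  show ?thesis
  proof (rule second_eigenvalue_Qp_le_of_test_vector[OF G1 G2 kr n, of "v @\<^sub>v 0\<^sub>v n"])
    have vv: "(v @\<^sub>v 0\<^sub>v n) \<bullet> (v @\<^sub>v 0\<^sub>v n) = v \<bullet> v"
      using v by (simp add: scalar_prod_append[of _ n _ n])
    then show "v @\<^sub>v 0\<^sub>v n \<noteq> 0\<^sub>v (n + n)"
      using v real_vec_square_pos_iff[of v n] real_vec_square_pos_iff[of "v @\<^sub>v 0\<^sub>v n" "n + n"] by auto
    have "vec (n + n) (\<lambda>_. 1) = ?ones @\<^sub>v ?ones"
      by (intro eq_vecI) auto
    then show "vec (n + n) (\<lambda>_. 1) \<bullet> (v @\<^sub>v 0\<^sub>v n) = 0"
      using v comm_scalar_prod[OF v(1), of ?ones] by (simp add: scalar_prod_append[of _ n _ n])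
    show "(v @\<^sub>v 0\<^sub>v n) \<bullet> (Qp n k (laplacian n E1) (laplacian n E2) B p *\<^sub>v (v @\<^sub>v 0\<^sub>v n))
        \<le> (eigs_asc (laplacian n E1) ! 1 + real k * p) * ((v @\<^sub>v 0\<^sub>v n) \<bullet> (v @\<^sub>v 0\<^sub>v n))"
      unfolding vv Qp_quadratic_form(1)[OF laplacian_carrier laplacian_carrier k_regular_01_carrier[OF kr] v(1)]
      using v(4) by (simp add: distrib_right)
  qed (use v laplacian_second_eigenvalue_nonneg[OF G1 n] p in simp_all)
qed

lemma second_eigenvalue_Qp_le_lower_layer:
  assumes G1: "simple_graph n E1" and G2: "simple_graph n E2" and kr: "k_regular_01 n k B"
    and n: "2 \<le> n" and p: "0 \<le> p"
  shows "eigs_asc (Qp n k (laplacian n E1) (laplacian n E2) B p) ! 1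
      \<le> eigs_asc (laplacian n E2) ! 1 + real k * p"
proof -
  let ?ones = "vec n (\<lambda>_. 1) :: real vec"
  obtain v where v: "v \<in> carrier_vec n" "v \<noteq> 0\<^sub>v n" "v \<bullet> ?ones = 0"
    "v \<bullet> (laplacian n E2 *\<^sub>v v) \<le> eigs_asc (laplacian n E2) ! 1 * (v \<bullet> v)"
    using second_eigenvalue_rayleigh_witness[OF laplacian_carrier laplacian_transpose[OF G2] n, of ?ones]
    by auto
  show ?thesis
  proof (rule second_eigenvalue_Qp_le_of_test_vector[OF G1 G2 kr n, of "0\<^sub>v n @\<^sub>v v"])
    have vv: "(0\<^sub>v n @\<^sub>v v) \<bullet> (0\<^sub>v n @\<^sub>v v) = v \<bullet> v"
      using v by (simp add: scalar_prod_append[of _ n _ n])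
    then show "0\<^sub>v n @\<^sub>v v \<noteq> 0\<^sub>v (n + n)"
      using v real_vec_square_pos_iff[of v n] real_vec_square_pos_iff[of "0\<^sub>v n @\<^sub>v v" "n + n"] by auto
    have "vec (n + n) (\<lambda>_. 1) = ?ones @\<^sub>v ?ones"
      by (intro eq_vecI) auto
    then show "vec (n + n) (\<lambda>_. 1) \<bullet> (0\<^sub>v n @\<^sub>v v) = 0"
      using v comm_scalar_prod[OF v(1), of ?ones] by (simp add: scalar_prod_append[of _ n _ n])
    show "(0\<^sub>v n @\<^sub>v v) \<bullet> (Qp n k (laplacian n E1) (laplacian n E2) B p *\<^sub>v (0\<^sub>v n @\<^sub>v v))
        \<le> (eigs_asc (laplacian n E2) ! 1 + real k * p) * ((0\<^sub>v n @\<^sub>v v) \<bullet> (0\<^sub>v n @\<^sub>v v))"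
      unfolding vv Qp_quadratic_form(2)[OF laplacian_carrier laplacian_carrier k_regular_01_carrier[OF kr] v(1)]
      using v(4) by (simp add: distrib_right)
  qed (use v laplacian_second_eigenvalue_nonneg[OF G2 n] p in simp_all)
qed

lemma coupling_le_algebraic_connectivities:
  assumes G1: "simple_graph n E1" and G2: "simple_graph n E2" and kr: "k_regular_01 n k B"
    and n: "2 \<le> n" and p: "0 \<le> p"
    and mu: "mu_Nm1 n k (laplacian n E1) (laplacian n E2) B p = 2 * real k * p"
  shows "real k * p \<le> min (eigs_asc (laplacian n E1) ! 1) (eigs_asc (laplacian n E2) ! 1)"
  using second_eigenvalue_Qp_le_upper_layer[OF G1 G2 kr n p] second_eigenvalue_Qp_le_lower_layer[OF G1 G2 kr n p]
    mu unfolding mu_Nm1_def by (simp add: mult.commute)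

theorem mainTheorem2:
  fixes n k :: nat and E1 E2 :: "nat \<Rightarrow> nat \<Rightarrow> bool" and B :: "real mat"
  assumes "n \<ge> 2"
    and "simple_graph n E1" and "simple_graph n E2"
    and "1 \<le> k" and "k \<le> n"
    and "k_regular_01 n k B"
  shows "bdd_above ({0} \<union> {p. p > 0 \<and> mu_Nm1 n k (laplacian n E1) (laplacian n E2) B p = 2 * real k * p})
    \<and> p_star n k (laplacian n E1) (laplacian n E2) B
        \<le> (1 / real k) * min (eigs_asc (laplacian n E1) ! 1) (eigs_asc (laplacian n E2) ! 1)"
proof -
  \<comment> \<open>The hypothesis k \<le> n is implied by k_regular_01 and not needed.\<close>
  note n = assms(1) and G1 = assms(2) and G2 = assms(3) and k = assms(4) and kr = assms(6)
  define S where "S = {0} \<union> {p. p > 0 \<and> mu_Nm1 n k (laplacian n E1) (laplacian n E2) B p = 2 * real k * p}"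
  define M where "M = (1 / real k) * min (eigs_asc (laplacian n E1) ! 1) (eigs_asc (laplacian n E2) ! 1)"
  have "0 \<le> M"
    unfolding M_def using laplacian_second_eigenvalue_nonneg[OF G1 n] laplacian_second_eigenvalue_nonneg[OF G2 n]
    by simp
  moreover have "real k * p \<le> real k * M" if "p > 0" "mu_Nm1 n k (laplacian n E1) (laplacian n E2) B p = 2 * real k * p" for p
    unfolding M_def using coupling_le_algebraic_connectivities[OF G1 G2 kr n _ that(2)] that(1) k by simp
  ultimately have bound: "p \<le> M" if "p \<in> S" for p
    using that k unfolding S_def by auto
  then have "bdd_above S"
    by (intro bdd_aboveI) blast
  moreover have "Sup S \<le> M"
    using bound by (intro cSup_least) (auto simp: S_def)
  ultimately show ?thesis
    unfolding S_def M_def p_star_def by simp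
qed

end
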